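(* Let $p$ be a prime, $m,t\ge1$, $R^t=\mathbb{F}_{p^m}[u]/\langle u^t\rangle$, $\omega(x)=\omega_0(x)+u\omega_1(x)+\dots+u^{t-1}\omega_{t-1}(x)\in R^t[x]$ with $\omega_i(x)\in\mathbb{F}_{p^m}[x]$, and $R^{t,\omega}=R^t[x]/\langle\omega(x)\rangle$. Let $\omega_0(x)=v_1(x)^{n_1}v_2(x)^{n_2}\cdots v_l(x)^{n_l}$ be the factorization of $\omega_0(x)$ into irreducible polynomials $v_i(x)\in\mathbb{F}_{p^m}[x]$ with positive integers $n_i$. Then every ideal of $R^{t,\omega}$ not contained in $\langle u\rangle$ can be expressed as $$\langle v_1(x)^{k_1}v_2(x)^{k_2}\cdots v_l(x)^{k_l}+u\,r(x)\rangle+J,$$ where $r(x)\in R^{t,\omega}$, $J$ is an ideal of $R^{t,\omega}$ contained in $\langle u\rangle$, and $0\le k_i\le n_i$ for $1\le i\le l$, not all $k_i=n_i$.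
   Context: Elements of $\mathbb{F}_{p^m}[x]$ are regarded as elements of $R^{t,\omega}$ via the natural inclusion $\mathbb{F}_{p^m}\subseteq R^t$. *)

theory Defs
  imports "HOL-Computational_Algebra.Polynomial"
    "HOL-Computational_Algebra.Factorial_Ring" "HOL-Algebra.QuotRing"
begin

definition tring :: "('b::comm_ring_1) ring" where
  "tring = \<lparr>carrier = UNIV, mult = (*), one = 1, zero = 0, add = (+)\<rparr>"

text \<open>Bivariate polynomials over F: the type 'a poly poly, outer variable x,
  inner variable u (coefficients of x-powers are polynomials in u).\<close>

definition uvar :: "('a::comm_ring_1) poly poly" where
  "uvar = [:[:0, 1:]:]"

definition emb :: "('a::comm_ring_1) poly \<Rightarrow> 'a poly poly" where
  "emb f = map_poly (\<lambda>c. [:c:]) f"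

definition omega :: "nat \<Rightarrow> (nat \<Rightarrow> ('a::comm_ring_1) poly) \<Rightarrow> 'a poly poly" where
  "omega t w = (\<Sum>i<t. uvar ^ i * emb (w i))"

text \<open>The ideal (u^t, omega) of F[u][x]; R^{t,omega} = R^t[x]/(omega) is
  (canonically) F[u][x]/(u^t, omega).\<close>
definition defideal :: "nat \<Rightarrow> (nat \<Rightarrow> ('a::comm_ring_1) poly) \<Rightarrow> 'a poly poly set" where
  "defideal t w = Idl\<^bsub>tring\<^esub> {uvar ^ t, omega t w}"

definition Rtw :: "nat \<Rightarrow> (nat \<Rightarrow> ('a::comm_ring_1) poly) \<Rightarrow> ('a poly poly set) ring" where
  "Rtw t w = tring Quot defideal t w"

definition cls :: "nat \<Rightarrow> (nat \<Rightarrow> ('a::comm_ring_1) poly) \<Rightarrow> 'a poly poly \<Rightarrow> 'a poly poly set" where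
  "cls t w f = defideal t w +>\<^bsub>tring\<^esub> f"

end

(*
  Reducing modulo u sends the preimage of I in F[u][x] onto an ideal of F[x] that contains
  omega_0 = v_1^n_1 ... v_l^n_l.  Since F[x] is Euclidean this ideal is generated by a divisor of
  omega_0, and such a divisor is associated to some v_1^k_1 ... v_l^k_l with k_i <= n_i.  Lifting
  this product to an element a = v_1^k_1 ... v_l^k_l + u r of I, every element of I differs from a
  multiple of a by an element of I inside <u>; and k = n is impossible, since then every element
  of I would reduce to a multiple of omega_0, i.e. I would lie in <u>.
*)

theory Submission
  imports Defs
begin

section \<open>Divisors in Euclidean rings\<close>

lemma euclidean_ideal_generator:
  fixes G :: "'a::euclidean_ring set"
  assumes add_closed: "\<And>x y. x \<in> G \<Longrightarrow> y \<in> G \<Longrightarrow> x + y \<in> G"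
    and mult_closed: "\<And>x h. x \<in> G \<Longrightarrow> h * x \<in> G"
    and "c \<in> G" "c \<noteq> 0"
  obtains g where "g \<in> G" "\<And>f. f \<in> G \<Longrightarrow> g dvd f"
proof -
  obtain g where g: "g \<in> G" "g \<noteq> 0"
    and g_min: "\<And>y. y \<in> G \<Longrightarrow> y \<noteq> 0 \<Longrightarrow> euclidean_size g \<le> euclidean_size y"
    using ex_has_least_nat[of "\<lambda>y. y \<in> G \<and> y \<noteq> 0" c euclidean_size] assms(3,4)
    by blast
  have "g dvd f" if "f \<in> G" for f
  proof (rule ccontr)
    assume "\<not> g dvd f"
    have "f + (- (f div g)) * g \<in> G"
      using that g(1) by (intro add_closed mult_closed)
    then have "f mod g \<in> G"
      by (simp add: minus_div_mult_eq_mod [symmetric])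
    moreover have "f mod g \<noteq> 0"
      using \<open>\<not> g dvd f\<close> by (simp add: mod_eq_0_iff_dvd)
    ultimately have "euclidean_size g \<le> euclidean_size (f mod g)"
      by (rule g_min)
    with mod_size_less[OF g(2), of f] show False by simp
  qed
  with g(1) that show ?thesis by blast
qed

lemma euclidean_bezout:
  fixes v x :: "'a::euclidean_ring"
  assumes "v \<noteq> 0"
  obtains a b where "a * v + b * x dvd v" "a * v + b * x dvd x"
proof -
  define G where "G = {a * v + b * x | a b. True}"
  have G_iff: "y \<in> G \<longleftrightarrow> (\<exists>a b. y = a * v + b * x)" for y
    unfolding G_def by blast
  have "v \<in> G"
    unfolding G_iff by (rule exI[of _ 1], rule exI[of _ 0]) simp
  have "x \<in> G"
    unfolding G_iff by (rule exI[of _ 0], rule exI[of _ 1]) simp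
  have mult_closed: "h * y \<in> G" if y: "y \<in> G" for y h
  proof -
    obtain a b where "y = a * v + b * x"
      using y unfolding G_iff by blast
    then have "h * y = (h * a) * v + (h * b) * x"
      by (simp add: algebra_simps)
    then show ?thesis
      unfolding G_iff by blast
  qed
  have add_closed: "y + z \<in> G" if y: "y \<in> G" and z: "z \<in> G" for y z
  proof -
    obtain a b c d where "y = a * v + b * x" "z = c * v + d * x"
      using y z unfolding G_iff by blast
    then have "y + z = (a + c) * v + (b + d) * x"
      by (simp add: algebra_simps)
    then show ?thesis
      unfolding G_iff by blast
  qed
  obtain d where "d \<in> G" "\<And>f. f \<in> G \<Longrightarrow> d dvd f"
    using euclidean_ideal_generator[OF add_closed mult_closed \<open>v \<in> G\<close> assms] by blast
  with \<open>v \<in> G\<close> \<open>x \<in> G\<close> that show ?thesis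
    unfolding G_iff by blast
qed

lemma irreducible_bezout:
  fixes v :: "'a::euclidean_ring"
  assumes "irreducible v" "\<not> v dvd x"
  obtains a b where "a * v + b * x = 1"
proof -
  have "v \<noteq> 0"
    using assms(1) by auto
  then obtain a b where d_dvd: "a * v + b * x dvd v" "a * v + b * x dvd x"
    by (rule euclidean_bezout)
  obtain e where "v = (a * v + b * x) * e"
    using d_dvd(1) ..
  have "is_unit (a * v + b * x)"
  proof (rule ccontr)
    assume "\<not> is_unit (a * v + b * x)"
    then have "is_unit e"
      using irreducibleD[OF assms(1) \<open>v = (a * v + b * x) * e\<close>] by blast
    then have "v dvd a * v + b * x"
      using \<open>v = (a * v + b * x) * e\<close> by (metis dvd_refl mult_unit_dvd_iff)
    then show False
      using d_dvd(2) assms(2) dvd_trans by blast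
  qed
  then obtain c where "1 = (a * v + b * x) * c" ..
  then have "(c * a) * v + (c * b) * x = 1"
    by (simp add: algebra_simps)
  then show ?thesis
    by (rule that)
qed

lemma dvd_irreducible_mult_cases:
  fixes v :: "'a::euclidean_ring"
  assumes "irreducible v" "g dvd v * y"
  obtains g' where "g = v * g'" "g' dvd y" | "g dvd y"
proof (cases "v dvd g")
  case True
  then obtain g' where g': "g = v * g'" ..
  moreover have "v \<noteq> 0"
    using assms(1) by auto
  ultimately have "g' dvd y"
    using assms(2) by simp
  with g' that(1) show ?thesis by blast
next
  case False
  then obtain a b where "a * v + b * g = 1"
    using irreducible_bezout[OF assms(1)] by blast
  then have "y = (a * v + b * g) * y"
    by simp
  also have "\<dots> = a * (v * y) + g * (b * y)"
    by (simp add: algebra_simps)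
  finally have "g dvd y"
    using assms(2) by (metis dvd_add dvd_mult dvd_triv_left)
  with that(2) show ?thesis .
qed

lemma dvd_irreducible_power_mult:
  fixes v :: "'a::euclidean_ring"
  assumes "irreducible v" "g dvd v ^ m * y"
  shows "\<exists>e g'. e \<le> m \<and> g = v ^ e * g' \<and> g' dvd y"
  using assms(2)
proof (induction m arbitrary: g)
  case 0
  then show ?case by auto
next
  case (Suc m)
  then have "g dvd v * (v ^ m * y)"
    by (simp add: mult.assoc)
  then consider g'' where "g = v * g''" "g'' dvd v ^ m * y" | "g dvd v ^ m * y"
    by (rule dvd_irreducible_mult_cases[OF assms(1)])
  then show ?case
  proof cases
    case (1 g'')
    then obtain e g' where "e \<le> m" "g'' = v ^ e * g'" "g' dvd y"
      using Suc.IH by blast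
    with 1 show ?thesis
      by (intro exI[of _ "Suc e"] exI[of _ g']) (simp add: mult.assoc)
  next
    case 2
    then show ?thesis
      using Suc.IH le_SucI by blast
  qed
qed

lemma dvd_prod_irreducible_powers_associated:
  fixes v :: "nat \<Rightarrow> 'a::euclidean_ring"
  assumes "\<forall>i<l. irreducible (v i)" "g dvd (\<Prod>i<l. v i ^ n i)"
  shows "\<exists>k. (\<forall>i<l. k i \<le> n i)
    \<and> g dvd (\<Prod>i<l. v i ^ k i) \<and> (\<Prod>i<l. v i ^ k i) dvd g"
  using assms
proof (induction l arbitrary: g)
  case 0
  then show ?case by auto
next
  case (Suc l)
  have "g dvd v l ^ n l * (\<Prod>i<l. v i ^ n i)"
    using Suc.prems(2) by (simp add: mult.commute)
  then obtain e g' where "e \<le> n l" "g = v l ^ e * g'" "g' dvd (\<Prod>i<l. v i ^ n i)"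
    using dvd_irreducible_power_mult Suc.prems(1) by blast
  moreover obtain k where "\<forall>i<l. k i \<le> n i"
    "g' dvd (\<Prod>i<l. v i ^ k i)" "(\<Prod>i<l. v i ^ k i) dvd g'"
    using Suc.IH Suc.prems(1) \<open>g' dvd _\<close> by auto
  moreover have "(\<Prod>i<Suc l. v i ^ (k(l := e)) i) = v l ^ e * (\<Prod>i<l. v i ^ k i)"
    by (simp add: mult.commute)
  ultimately show ?case
    by (intro exI[of _ "k(l := e)"]) (auto simp: less_Suc_eq mult_dvd_mono)
qed

lemma ideal_generated_by_prod_irreducible_powers:
  fixes G :: "'a::euclidean_ring set" and v :: "nat \<Rightarrow> 'a"
  assumes add_closed: "\<And>x y. x \<in> G \<Longrightarrow> y \<in> G \<Longrightarrow> x + y \<in> G"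
    and mult_closed: "\<And>x h. x \<in> G \<Longrightarrow> h * x \<in> G"
    and irreducible: "\<forall>i<l. irreducible (v i)" and prod_mem: "(\<Prod>i<l. v i ^ n i) \<in> G"
  obtains k where "\<forall>i<l. k i \<le> n i" "(\<Prod>i<l. v i ^ k i) \<in> G"
    "\<And>f. f \<in> G \<Longrightarrow> (\<Prod>i<l. v i ^ k i) dvd f"
proof -
  have "(\<Prod>i<l. v i ^ n i) \<noteq> 0"
    using irreducible by auto
  then obtain g where "g \<in> G" and g_dvd: "\<And>f. f \<in> G \<Longrightarrow> g dvd f"
    using euclidean_ideal_generator[OF add_closed mult_closed prod_mem] by blast
  obtain k where "\<forall>i<l. k i \<le> n i"
    "g dvd (\<Prod>i<l. v i ^ k i)" "(\<Prod>i<l. v i ^ k i) dvd g"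
    using dvd_prod_irreducible_powers_associated[OF irreducible g_dvd[OF prod_mem]] by blast
  moreover have "(\<Prod>i<l. v i ^ k i) \<in> G"
    using mult_closed[OF \<open>g \<in> G\<close>] \<open>g dvd (\<Prod>i<l. v i ^ k i)\<close>
    by (metis dvd_div_mult_self)
  moreover have "(\<Prod>i<l. v i ^ k i) dvd f" if "f \<in> G" for f
    using g_dvd[OF that] \<open>(\<Prod>i<l. v i ^ k i) dvd g\<close> by (rule dvd_trans[rotated])
  ultimately show ?thesis
    using that by blast
qed

section \<open>Reduction modulo u\<close>

definition reduce_mod_u :: "('a::comm_ring_1) poly poly \<Rightarrow> 'a poly" where
  "reduce_mod_u f = map_poly (\<lambda>c. coeff c 0) f"

lemma coeff_reduce_mod_u: "coeff (reduce_mod_u f) i = coeff (coeff f i) 0"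
  by (simp add: reduce_mod_u_def coeff_map_poly)

lemma reduce_mod_u_add: "reduce_mod_u (f + g) = reduce_mod_u f + reduce_mod_u g"
  by (rule poly_eqI) (simp add: coeff_reduce_mod_u)

lemma reduce_mod_u_diff: "reduce_mod_u (f - g) = reduce_mod_u f - reduce_mod_u g"
  by (rule poly_eqI) (simp add: coeff_reduce_mod_u)

lemma reduce_mod_u_mult: "reduce_mod_u (f * g) = reduce_mod_u f * reduce_mod_u g"
  by (rule poly_eqI) (simp add: coeff_reduce_mod_u coeff_mult coeff_sum coeff_mult_0)

lemma reduce_mod_u_power: "reduce_mod_u (f ^ n) = reduce_mod_u f ^ n"
proof (induction n)
  case 0
  show ?case by (rule poly_eqI) (simp add: coeff_reduce_mod_u coeff_1)
qed (simp add: reduce_mod_u_mult)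

lemma reduce_mod_u_sum: "reduce_mod_u (\<Sum>i\<in>A. f i) = (\<Sum>i\<in>A. reduce_mod_u (f i))"
  by (rule poly_eqI) (simp add: coeff_reduce_mod_u coeff_sum)

lemma reduce_mod_u_uvar: "reduce_mod_u uvar = 0"
  by (rule poly_eqI) (simp add: coeff_reduce_mod_u uvar_def coeff_pCons split: nat.splits)

lemma reduce_mod_u_emb: "reduce_mod_u (emb g) = g"
  by (rule poly_eqI) (simp add: coeff_reduce_mod_u emb_def coeff_map_poly)

lemma reduce_mod_u_omega:
  assumes "t \<ge> 1"
  shows "reduce_mod_u (omega t w) = w 0"
proof -
  have "reduce_mod_u (omega t w) = (\<Sum>i<t. 0 ^ i * w i)"
    by (simp add: omega_def reduce_mod_u_sum reduce_mod_u_mult reduce_mod_u_power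
        reduce_mod_u_uvar reduce_mod_u_emb)
  also have "\<dots> = w 0"
    using assms by (cases t) (simp_all add: sum.lessThan_Suc_shift del: sum.lessThan_Suc)
  finally show ?thesis .
qed

lemma reduce_mod_u_emb_add_uvar_mult [simp]: "reduce_mod_u (emb g + uvar * q) = g"
  by (simp add: reduce_mod_u_add reduce_mod_u_mult reduce_mod_u_uvar reduce_mod_u_emb)

lemma decompose_emb_reduce_mod_u: "\<exists>q. f = emb (reduce_mod_u f) + uvar * q"
proof
  show "f = emb (reduce_mod_u f) + uvar * map_poly (\<lambda>c. synthetic_div c 0) f"
  proof (rule poly_eqI)
    fix i
    have "coeff f i = [:coeff (coeff f i) 0:] + [:0, 1:] * synthetic_div (coeff f i) 0"
      using synthetic_div_correct'[of 0 "coeff f i"] by (simp add: poly_0_coeff_0 add.commute)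
    then show "coeff f i
        = coeff (emb (reduce_mod_u f) + uvar * map_poly (\<lambda>c. synthetic_div c 0) f) i"
      by (simp add: emb_def uvar_def coeff_map_poly coeff_reduce_mod_u)
  qed
qed

lemma dvd_reduce_mod_u_decompose:
  fixes f g :: "('a::comm_ring_1) poly poly"
  assumes "reduce_mod_u g dvd reduce_mod_u f"
  obtains h q where "f = emb h * g + uvar * q"
proof -
  obtain h where h: "reduce_mod_u f = reduce_mod_u g * h"
    using assms by blast
  have "reduce_mod_u (f - emb h * g) = 0"
    by (simp add: reduce_mod_u_diff reduce_mod_u_mult reduce_mod_u_emb h mult.commute)
  then obtain q where "f - emb h * g = uvar * q"
    using decompose_emb_reduce_mod_u[of "f - emb h * g"] by (auto simp: emb_def)
  then show ?thesis
    using that by (metis diff_eq_eq add.commute)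
qed

section \<open>The quotient ring and residue ideals\<close>

lemma cring_tring: "cring (tring :: ('a::comm_ring_1) ring)"
proof (rule cringI)
  show "abelian_group (tring :: 'a ring)"
    by (rule abelian_groupI) (auto simp: tring_def algebra_simps intro: exI[of _ "- _"])
  show "Group.comm_monoid (tring :: 'a ring)"
    by (rule comm_monoidI) (auto simp: tring_def algebra_simps)
qed (simp add: tring_def algebra_simps)

lemma tring_simps [simp]:
  "carrier tring = UNIV" "x \<oplus>\<^bsub>tring\<^esub> y = x + y" "x \<otimes>\<^bsub>tring\<^esub> y = x * y"
  "\<zero>\<^bsub>tring\<^esub> = 0" "\<one>\<^bsub>tring\<^esub> = 1"
  by (simp_all add: tring_def)

lemma ideal_defideal: "ideal (defideal t w) tring"
  unfolding defideal_def
  by (rule ring.genideal_ideal[OF cring.axioms(1)[OF cring_tring]]) simp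

lemma cring_Rtw: "cring (Rtw t w)"
  unfolding Rtw_def by (rule ideal.quotient_is_cring[OF ideal_defideal cring_tring])

interpretation Rtw: cring "Rtw t w" for t w
  by (rule cring_Rtw)

lemma cls_ring_hom: "cls t w \<in> ring_hom tring (Rtw t w)"
  unfolding Rtw_def cls_def[abs_def] by (rule ideal.rcos_ring_hom[OF ideal_defideal])

lemma cls_add [simp]: "cls t w (f + g) = cls t w f \<oplus>\<^bsub>Rtw t w\<^esub> cls t w g"
  using ring_hom_add[OF cls_ring_hom, of f g] by simp

lemma cls_mult [simp]: "cls t w (f * g) = cls t w f \<otimes>\<^bsub>Rtw t w\<^esub> cls t w g"
  using ring_hom_mult[OF cls_ring_hom, of f g] by simp

lemma cls_closed [simp]: "cls t w f \<in> carrier (Rtw t w)"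
  using ring_hom_closed[OF cls_ring_hom, of f] by simp

lemma carrier_Rtw: "carrier (Rtw t w) = range (cls t w)"
  by (auto simp: Rtw_def cls_def FactRing_def A_RCOSETS_def')

lemma cls_omega [simp]: "cls t w (omega t w) = \<zero>\<^bsub>Rtw t w\<^esub>"
proof -
  interpret D: ideal "defideal t w" tring
    by (rule ideal_defideal)
  have "omega t w \<in> defideal t w"
    unfolding defideal_def using D.genideal_self[of "{uvar ^ t, omega t w}"] by simp
  then show ?thesis
    unfolding Rtw_def cls_def by (simp add: D.a_rcos_const FactRing_def)
qed

lemma cls_uvar_mult_mem_PIdl: "cls t w (uvar * q) \<in> PIdl\<^bsub>Rtw t w\<^esub> (cls t w uvar)"
  unfolding cgenideal_def
proof (intro CollectI exI conjI)
  show "cls t w (uvar * q) = cls t w q \<otimes>\<^bsub>Rtw t w\<^esub> cls t w uvar"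
    by (simp add: Rtw.m_comm)
qed simp

definition residue_ideal ::
    "nat \<Rightarrow> (nat \<Rightarrow> ('a::comm_ring_1) poly) \<Rightarrow> 'a poly poly set set \<Rightarrow> 'a poly set" where
  "residue_ideal t w I = reduce_mod_u ` {f. cls t w f \<in> I}"

context
  fixes t :: nat and w :: "nat \<Rightarrow> ('a::comm_ring_1) poly" and I :: "'a poly poly set set"
  assumes I: "ideal I (Rtw t w)"
begin

interpretation I: ideal I "Rtw t w"
  by (rule I)

lemma residue_ideal_add:
  assumes "x \<in> residue_ideal t w I" "y \<in> residue_ideal t w I"
  shows "x + y \<in> residue_ideal t w I"
proof -
  obtain f g where "cls t w f \<in> I" "x = reduce_mod_u f" "cls t w g \<in> I" "y = reduce_mod_u g"
    using assms unfolding residue_ideal_def by blast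
  then show ?thesis
    unfolding residue_ideal_def
    by (intro image_eqI[of _ _ "f + g"]) (simp_all add: reduce_mod_u_add)
qed

lemma residue_ideal_mult:
  assumes "x \<in> residue_ideal t w I"
  shows "h * x \<in> residue_ideal t w I"
proof -
  obtain f where "cls t w f \<in> I" "x = reduce_mod_u f"
    using assms unfolding residue_ideal_def by blast
  then show ?thesis
    unfolding residue_ideal_def
    by (intro image_eqI[of _ _ "emb h * f"])
      (simp_all add: reduce_mod_u_mult reduce_mod_u_emb I.I_l_closed)
qed

lemma w0_mem_residue_ideal: "t \<ge> 1 \<Longrightarrow> w 0 \<in> residue_ideal t w I"
  unfolding residue_ideal_def
  by (rule image_eqI[of _ _ "omega t w"]) (simp_all add: reduce_mod_u_omega)

lemma residue_ideal_lift:
  assumes "x \<in> residue_ideal t w I"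
  obtains q where "cls t w (emb x + uvar * q) \<in> I"
proof -
  obtain f where "cls t w f \<in> I" "x = reduce_mod_u f"
    using assms unfolding residue_ideal_def by blast
  moreover obtain q where "f = emb (reduce_mod_u f) + uvar * q"
    using decompose_emb_reduce_mod_u by blast
  ultimately show ?thesis
    using that by metis
qed

lemma ideal_Rtw_eq_PIdl_add_inter_PIdl_uvar:
  assumes a_mem: "cls t w a \<in> I"
    and a_dvd: "\<And>x. x \<in> residue_ideal t w I \<Longrightarrow> reduce_mod_u a dvd x"
  shows "I = PIdl\<^bsub>Rtw t w\<^esub> (cls t w a) <+>\<^bsub>Rtw t w\<^esub> (I \<inter> PIdl\<^bsub>Rtw t w\<^esub> (cls t w uvar))"
    (is "I = ?A <+>\<^bsub>Rtw t w\<^esub> ?J")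
proof
  show "?A <+>\<^bsub>Rtw t w\<^esub> ?J \<subseteq> I"
  proof
    fix y
    assume "y \<in> ?A <+>\<^bsub>Rtw t w\<^esub> ?J"
    then obtain z j where "z \<in> carrier (Rtw t w)" "j \<in> I"
      "y = z \<otimes>\<^bsub>Rtw t w\<^esub> cls t w a \<oplus>\<^bsub>Rtw t w\<^esub> j"
      unfolding set_add_def' cgenideal_def by blast
    then show "y \<in> I"
      using a_mem by (simp add: I.I_l_closed)
  qed
  show "I \<subseteq> ?A <+>\<^bsub>Rtw t w\<^esub> ?J"
  proof
    fix y
    assume "y \<in> I"
    then obtain f where f: "y = cls t w f"
      using I.a_subset carrier_Rtw by blast
    then have "reduce_mod_u a dvd reduce_mod_u f"
      using a_dvd \<open>y \<in> I\<close> unfolding residue_ideal_def by blast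
    then obtain h q where fq: "f = emb h * a + uvar * q"
      by (rule dvd_reduce_mod_u_decompose)
    then have "uvar * q = f + (- emb h) * a"
      by simp
    then have "cls t w (uvar * q)
        = cls t w f \<oplus>\<^bsub>Rtw t w\<^esub> cls t w (- emb h) \<otimes>\<^bsub>Rtw t w\<^esub> cls t w a"
      by (simp only: cls_add cls_mult)
    also have "\<dots> \<in> I"
      using \<open>y \<in> I\<close> f a_mem by (simp add: I.I_l_closed)
    finally have "cls t w (uvar * q) \<in> ?J"
      using cls_uvar_mult_mem_PIdl by blast
    moreover have "cls t w (emb h) \<otimes>\<^bsub>Rtw t w\<^esub> cls t w a \<in> ?A"
      unfolding cgenideal_def by (rule CollectI, rule exI[of _ "cls t w (emb h)"]) simp
    moreover have "y = cls t w (emb h) \<otimes>\<^bsub>Rtw t w\<^esub> cls t w a \<oplus>\<^bsub>Rtw t w\<^esub> cls t w (uvar * q)"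
      using f fq by (simp del: cls_mult) simp
    ultimately show "y \<in> ?A <+>\<^bsub>Rtw t w\<^esub> ?J"
      unfolding set_add_def' by blast
  qed
qed

lemma ideal_Rtw_subset_PIdl_uvar:
  assumes "t \<ge> 1" and w0_dvd: "\<And>x. x \<in> residue_ideal t w I \<Longrightarrow> w 0 dvd x"
  shows "I \<subseteq> PIdl\<^bsub>Rtw t w\<^esub> (cls t w uvar)"
proof
  fix y
  assume "y \<in> I"
  then obtain f where f: "y = cls t w f"
    using I.a_subset carrier_Rtw by blast
  then have "w 0 dvd reduce_mod_u f"
    using w0_dvd \<open>y \<in> I\<close> unfolding residue_ideal_def by blast
  then have "reduce_mod_u (omega t w) dvd reduce_mod_u f"
    by (simp add: reduce_mod_u_omega[OF \<open>t \<ge> 1\<close>])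
  then obtain h q where "f = emb h * omega t w + uvar * q"
    by (rule dvd_reduce_mod_u_decompose)
  then have "y = cls t w (uvar * q)"
    using f by (simp del: cls_mult) simp
  then show "y \<in> PIdl\<^bsub>Rtw t w\<^esub> (cls t w uvar)"
    using cls_uvar_mult_mem_PIdl by simp
qed

end

theorem lemma3p1:
  fixes p m t l :: nat
    and w :: "nat \<Rightarrow> ('a::{field,finite}) poly"
    and v :: "nat \<Rightarrow> 'a poly"
    and n :: "nat \<Rightarrow> nat"
    and I :: "'a poly poly set set"
  assumes "prime p" and "m \<ge> 1" and "t \<ge> 1" and "card (UNIV :: 'a set) = p ^ m"
    and "w 0 = (\<Prod>i<l. v i ^ n i)"
    and "\<forall>i<l. Factorial_Ring.irreducible (v i)"
    and "\<forall>i<l. n i \<ge> 1"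
    and "\<forall>i<l. \<forall>j<l. i \<noteq> j \<longrightarrow> \<not> v i dvd v j"
    and "ideal I (Rtw t w)"
    and "\<not> I \<subseteq> PIdl\<^bsub>Rtw t w\<^esub> (cls t w uvar)"
  shows "\<exists>k r J. (\<forall>i<l. k i \<le> n i) \<and> (\<exists>i<l. k i \<noteq> n i)
    \<and> r \<in> carrier (Rtw t w) \<and> ideal J (Rtw t w)
    \<and> J \<subseteq> PIdl\<^bsub>Rtw t w\<^esub> (cls t w uvar)
    \<and> I = (PIdl\<^bsub>Rtw t w\<^esub> (cls t w (emb (\<Prod>i<l. v i ^ k i))
              \<oplus>\<^bsub>Rtw t w\<^esub> (cls t w uvar \<otimes>\<^bsub>Rtw t w\<^esub> r)))
           <+>\<^bsub>Rtw t w\<^esub> J"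
proof -
  note I = assms(9)
  obtain k where k_le: "\<forall>i<l. k i \<le> n i"
    and prod_mem: "(\<Prod>i<l. v i ^ k i) \<in> residue_ideal t w I"
    and prod_dvd: "\<And>x. x \<in> residue_ideal t w I \<Longrightarrow> (\<Prod>i<l. v i ^ k i) dvd x"
    using ideal_generated_by_prod_irreducible_powers[OF residue_ideal_add[OF I]
        residue_ideal_mult[OF I] assms(6) w0_mem_residue_ideal[OF I assms(3), unfolded assms(5)]]
    by blast
  obtain q where lift_mem: "cls t w (emb (\<Prod>i<l. v i ^ k i) + uvar * q) \<in> I"
    using residue_ideal_lift[OF I prod_mem] .
  have "\<exists>i<l. k i \<noteq> n i"
  proof (rule ccontr)
    assume "\<not> (\<exists>i<l. k i \<noteq> n i)"
    then have "(\<Prod>i<l. v i ^ k i) = w 0"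
      unfolding assms(5) by (intro prod.cong) auto
    then have "I \<subseteq> PIdl\<^bsub>Rtw t w\<^esub> (cls t w uvar)"
      using ideal_Rtw_subset_PIdl_uvar[OF I assms(3)] prod_dvd by simp
    with assms(10) show False ..
  qed
  moreover have "I = PIdl\<^bsub>Rtw t w\<^esub> (cls t w (emb (\<Prod>i<l. v i ^ k i) + uvar * q))
      <+>\<^bsub>Rtw t w\<^esub> (I \<inter> PIdl\<^bsub>Rtw t w\<^esub> (cls t w uvar))"
    using ideal_Rtw_eq_PIdl_add_inter_PIdl_uvar[OF I lift_mem] prod_dvd by simp
  moreover have "ideal (I \<inter> PIdl\<^bsub>Rtw t w\<^esub> (cls t w uvar)) (Rtw t w)"
    by (rule Rtw.i_intersect[OF I Rtw.cgenideal_ideal]) simp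
  ultimately show ?thesis
    using k_le by (intro exI[of _ k] exI[of _ "cls t w q"]) auto
qed

end
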